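(* Let $f$ be a symmetric probability density on $\mathbb R$ with distribution function $F$ and finite variance $\sigma^2(f)=\int_{\mathbb R}x^2f(x)\,dx>0$. Put $v(x)=\int_{-\infty}^x uf(u)\,du$ and $q(s)=\int_{-\infty}^s v(x)f(x)\,dx$. Then $$\pi^4\Big(\int_{\mathbb R}q^2(s)f(s)\,ds-\Big(\int_{\mathbb R}q(s)f(s)\,ds\Big)^2\Big)=\sigma^2(f)$$ holds if and only if $f$ is a symmetric arcsine density, i.e. $f(x)=\big(\pi\sqrt{c^2-x^2}\big)^{-1}\mathbf 1\{-c<x<c\}$ for some $c>0$. Equivalently, the integrated Watson statistic $\bar U_n^2$ is locally asymptotically optimal in the Bahadur sense under the skew alternative $h(x,\theta)=2f(x)G(\theta x)$ exactly when $f$ is a symmetric arcsine density.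
   Context: With $F_n$ the empirical distribution function and $B_n(x)=\sqrt n\int_{-\infty}^x(F_n(t)-F(t))\,dF(t)$, the statistic is $\bar U_n^2=\int_{\mathbb R}\big(B_n(t)-\int_{\mathbb R}B_n\,dF\big)^2dF(t)$. Its local Bahadur efficiency under the skew alternative equals $\pi^4\big(\int q^2f-(\int qf)^2\big)/\sigma^2(f)$, and local asymptotic optimality means that this efficiency equals $1$. *)

theory Defs
  imports "HOL-Analysis.Analysis"
begin

definition prob_density :: "(real \<Rightarrow> real) \<Rightarrow> bool" where
  "prob_density f \<longleftrightarrow> f \<in> borel_measurable lborel \<and> (\<forall>x. 0 \<le> f x)
     \<and> integrable lborel f \<and> (\<integral>x. f x \<partial>lborel) = 1"

definition symmetric_fun :: "(real \<Rightarrow> real) \<Rightarrow> bool" where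
  "symmetric_fun f \<longleftrightarrow> (\<forall>x. f (- x) = f x)"

definition var_f :: "(real \<Rightarrow> real) \<Rightarrow> real" where
  "var_f f = (\<integral>x. x\<^sup>2 * f x \<partial>lborel)"

definition v_fun :: "(real \<Rightarrow> real) \<Rightarrow> real \<Rightarrow> real" where
  "v_fun f x = (\<integral>u\<in>{..x}. u * f u \<partial>lborel)"

definition q_fun :: "(real \<Rightarrow> real) \<Rightarrow> real \<Rightarrow> real" where
  "q_fun f s = (\<integral>x\<in>{..s}. v_fun f x * f x \<partial>lborel)"

definition arcsine_density :: "real \<Rightarrow> real \<Rightarrow> real" where
  "arcsine_density c x = (if - c < x \<and> x < c then 1 / (pi * sqrt (c\<^sup>2 - x\<^sup>2)) else 0)"

end

theory Submission
  imports Defs "HOL-Probability.Probability" "HOL-Real_Asymp.Real_Asymp"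
begin

(*
  Substituting u = F x turns everything into functionals of the quantile function G = F\<^sup>-\<^sup>1 on
  (0, 1): \<sigma>\<^sup>2 = \<integral> G\<^sup>2, v \<circ> G = V and q \<circ> G = W are the first and second primitives of G, and
  symmetry of f gives \<integral> G = 0.  Wirtinger's inequality \<pi>\<^sup>2 \<integral> V\<^sup>2 \<le> \<integral> G\<^sup>2 for V (0) = V (1) = 0,
  applied to G and to the centred primitive W - \<integral> W, yields \<pi>\<^sup>4 Var W \<le> \<pi>\<^sup>2 \<integral> V\<^sup>2 \<le> \<integral> G\<^sup>2,
  i.e. the efficiency never exceeds 1.  Equality in Wirtinger's inequality forces G = k cos (\<pi> u);
  monotonicity of G gives k < 0, and the image of the uniform law under -c cos (\<pi> u) is the arcsine
  law on (-c, c).  Conversely, for the arcsine law the quantile is -c cos (\<pi> u) and equality is a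
  direct computation.

  Wirtinger's inequality is proved by completing the square with the weight \<pi> cot (\<pi> u), the
  logarithmic derivative of sin (\<pi> u), and integrating by parts on intervals exhausting (0, 1).
  Since a quantile function is only left-continuous, the fundamental theorem of calculus is used in
  a version for left derivatives.
*)

section \<open>Integration against left derivatives\<close>

lemma closed_left_continuation_imp_Icc_subset:
  fixes S :: "real set"
  assumes ab: "a \<le> b" and closed: "closed S" and bS: "b \<in> S"
    and step: "\<And>x. x \<in> S \<Longrightarrow> a < x \<Longrightarrow> x \<le> b \<Longrightarrow> \<exists>d>0. \<forall>y. a \<le> y \<and> x - d < y \<and> y \<le> x \<longrightarrow> y \<in> S"
  shows "{a..b} \<subseteq> S"
proof -
  define T where "T = {x \<in> {a..b}. {x..b} \<subseteq> S}"
  define s where "s = Inf T"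
  have bT: "b \<in> T" using ab bS by (auto simp: T_def)
  have bdd: "bdd_below T" by (auto simp: T_def intro!: bdd_belowI[of _ a])
  have as: "a \<le> s" and sb: "s \<le> b"
    using bT bdd by (auto simp: s_def T_def intro!: cInf_greatest cInf_lower)
  have above_s: "{s<..b} \<subseteq> S"
  proof
    fix y assume y: "y \<in> {s<..b}"
    then obtain x where "x \<in> T" "x < y" using cInf_less_iff[OF _ bdd, of y] bT by (auto simp: s_def)
    then show "y \<in> S" using y by (auto simp: T_def)
  qed
  have "s \<in> S"
  proof (cases "s = b")
    case False
    then have "s \<in> closure {s<..b}" using sb by (simp add: closure_greaterThanAtMost)
    then show ?thesis using closure_minimal[OF above_s closed] by blast
  qed (use bS in simp)
  then have s_to_b: "{s..b} \<subseteq> S" using above_s by (force simp: order.order_iff_strict)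
  then have sT: "s \<in> T" using as sb by (simp add: T_def)
  have "s = a"
  proof (rule ccontr)
    assume "s \<noteq> a"
    then obtain d where d: "d > 0" "\<forall>y. a \<le> y \<and> s - d < y \<and> y \<le> s \<longrightarrow> y \<in> S"
      using step[OF \<open>s \<in> S\<close> _ sb] as by force
    define y where "y = max a (s - d / 2)"
    have "{y..b} \<subseteq> S"
    proof
      fix z assume "z \<in> {y..b}"
      then show "z \<in> S" using d s_to_b by (cases "z \<le> s") (auto simp: y_def)
    qed
    then have "y \<in> T" using as sb d by (auto simp: T_def y_def)
    then have "s \<le> y" using bdd by (simp add: s_def cInf_lower)
    then show False using d \<open>s \<noteq> a\<close> as by (simp add: y_def)
  qed
  then show ?thesis using sT by (simp add: T_def)
qed

lemma left_deriv_zero_imp_abs_diff_le: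
  fixes h :: "real \<Rightarrow> real"
  assumes ab: "a \<le> b" and cont: "continuous_on {a..b} h"
    and deriv: "\<And>x. x \<in> {a<..b} \<Longrightarrow> (h has_real_derivative 0) (at x within {a..x})"
    and e: "e > 0"
  shows "\<bar>h a - h b\<bar> \<le> e * (b - a)"
proof -
  define S where "S = {y \<in> {a..b}. \<bar>h y - h b\<bar> \<le> e * (b - y)}"
  have "S = {a..b} \<inter> (\<lambda>y. \<bar>h y - h b\<bar> - e * (b - y)) -` {..0}" by (auto simp: S_def)
  moreover have "continuous_on {a..b} (\<lambda>y. \<bar>h y - h b\<bar> - e * (b - y))"
    by (intro continuous_intros cont)
  ultimately have "closed S" by (metis continuous_closed_preimage closed_atLeastAtMost closed_atMost)
  moreover have "\<exists>d>0. \<forall>y. a \<le> y \<and> x - d < y \<and> y \<le> x \<longrightarrow> y \<in> S"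
    if x: "x \<in> S" "a < x" "x \<le> b" for x
  proof -
    have "(h has_derivative (*) 0) (at x within {a..x})"
      using deriv[of x] x by (simp add: has_field_derivative_def)
    then obtain d where d: "d > 0"
      and near: "\<forall>y\<in>{a..x}. norm (y - x) < d \<longrightarrow> norm (h y - h x - 0 * (y - x)) \<le> e * norm (y - x)"
      using e unfolding has_derivative_within_alt by blast
    have "y \<in> S" if y: "a \<le> y" "x - d < y" "y \<le> x" for y
    proof -
      have "\<bar>h y - h x\<bar> \<le> e * (x - y)" using near y d by auto
      moreover have "\<bar>h x - h b\<bar> \<le> e * (b - x)" using x by (simp add: S_def)
      ultimately have "\<bar>h y - h b\<bar> \<le> e * (b - y)" by (simp add: algebra_simps)
      then show ?thesis using y x by (simp add: S_def)
    qed
    then show ?thesis using d by blast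
  qed
  ultimately have "a \<in> S"
    using closed_left_continuation_imp_Icc_subset[OF ab, of S] ab by (auto simp: S_def)
  then show ?thesis by (simp add: S_def)
qed

lemma left_deriv_zero_imp_const:
  fixes h :: "real \<Rightarrow> real"
  assumes ab: "a \<le> b" and cont: "continuous_on {a..b} h"
    and deriv: "\<And>x. x \<in> {a<..b} \<Longrightarrow> (h has_real_derivative 0) (at x within {a..x})"
  shows "h b = h a"
proof (rule ccontr)
  assume ne: "h b \<noteq> h a"
  then have "a < b" using ab by (cases "a = b") auto
  have "\<bar>h a - h b\<bar> \<le> \<bar>h a - h b\<bar> / (2 * (b - a)) * (b - a)"
    using ne \<open>a < b\<close> by (intro left_deriv_zero_imp_abs_diff_le[OF ab cont deriv] divide_pos_pos) auto
  also have "\<dots> = \<bar>h a - h b\<bar> / 2" using \<open>a < b\<close> by (simp add: field_simps)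
  finally show False using ne by simp
qed

lemma set_integral_eq_diff_left_deriv:
  fixes g h :: "real \<Rightarrow> real"
  assumes ab: "a \<le> b"
    and g_int: "set_integrable lborel {a..b} g"
    and g_cont: "\<And>x. x \<in> {a<..b} \<Longrightarrow> continuous (at x within {a..x}) g"
    and h_cont: "continuous_on {a..b} h"
    and h_deriv: "\<And>x. x \<in> {a<..b} \<Longrightarrow> (h has_real_derivative g x) (at x within {a..x})"
  shows "(LINT x:{a..b}|lborel. g x) = h b - h a"
proof -
  have gI: "g integrable_on {a..b}" and eq: "(LINT x:{a..b}|lborel. g x) = integral {a..b} g"
    using set_borel_integral_eq_integral[OF g_int] by auto
  define H where "H w = h w - integral {a..w} g" for w
  have "continuous_on {a..b} H" unfolding H_def
    by (intro continuous_on_diff h_cont indefinite_integral_continuous_1 gI)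
  moreover have "(H has_real_derivative 0) (at x within {a..x})" if x: "x \<in> {a<..b}" for x
  proof -
    have gIx: "g integrable_on {a..x}" by (rule integrable_on_subinterval[OF gI]) (use x in auto)
    have "((\<lambda>u. integral {a..u} g) has_vector_derivative g x) (at x within {a..x} - {})"
      by (rule integral_has_vector_derivative_continuous_at[OF gIx]) (use x g_cont[OF x] in auto)
    then have "((\<lambda>u. integral {a..u} g) has_real_derivative g x) (at x within {a..x})"
      by (simp add: has_real_derivative_iff_has_vector_derivative)
    from DERIV_diff[OF h_deriv[OF x] this] show ?thesis by (simp add: H_def[abs_def])
  qed
  ultimately have "H b = H a" by (rule left_deriv_zero_imp_const[OF ab])
  then show ?thesis using eq by (simp add: H_def)
qed

lemma set_integral_eq_diff_deriv:
  fixes f F :: "real \<Rightarrow> real"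
  assumes "a \<le> b" "\<And>x. (F has_real_derivative f x) (at x)" "continuous_on {a..b} f"
  shows "(LINT x:{a..b}|lborel. f x) = F b - F a"
  unfolding set_lebesgue_integral_def
  by (rule integral_FTC_atLeastAtMost[OF assms(1) _ assms(3)])
     (use assms(2) in \<open>auto simp: has_real_derivative_iff_has_vector_derivative[symmetric]
        intro: has_field_derivative_at_within\<close>)

lemma set_integral_Icc_combine:
  fixes h :: "real \<Rightarrow> real"
  assumes h_int: "set_integrable lborel {a..d} h" and "a \<le> c" "c \<le> d"
  shows "(LINT x:{a..d}|lborel. h x) = (LINT x:{a..c}|lborel. h x) + (LINT x:{c..d}|lborel. h x)"
proof -
  have sub: "set_integrable lborel {p..q} h" if "a \<le> p" "q \<le> d" for p q
    by (rule set_integrable_subset[OF h_int]) (use that in auto)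
  have "integral {a..c} h + integral {c..d} h = integral {a..d} h"
    using set_borel_integral_eq_integral(1)[OF h_int] assms(2,3)
    by (intro Henstock_Kurzweil_Integration.integral_combine) auto
  then show ?thesis
    using assms(2,3) by (simp add: set_borel_integral_eq_integral(2)[OF sub])
qed

lemma set_integral_Icc_eq_Ioo:
  fixes f :: "real \<Rightarrow> real"
  shows "(LINT u:{a..b}|lborel. f u) = (LINT u:{a<..<b}|lborel. f u)"
    and "set_integrable lborel {a..b} f \<longleftrightarrow> set_integrable lborel {a<..<b} f"
  by (rule set_integral_discrete_difference[where X = "{a, b}"]
      set_integrable_discrete_difference[where X = "{a, b}"]; auto)+

lemma set_integral_Ioo_indicator_atMost:
  fixes k :: "real \<Rightarrow> real"
  assumes "w \<le> 1"
  shows "(LINT u:{0<..<1}|lborel. indicator {..w} u * k u) = (LINT u:{0..w}|lborel. k u)"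
proof -
  have "(LINT u:{0<..<1}|lborel. indicator {..w} u * k u) = (LINT u:{0<..<1} \<inter> {..w}|lborel. k u)"
    unfolding set_lebesgue_integral_def by (simp add: indicator_inter_arith mult.assoc)
  also have "\<dots> = (LINT u:{0..w}|lborel. k u)"
    by (rule set_integral_discrete_difference[where X = "{0, 1}"]) (use assms in auto)
  finally show ?thesis .
qed

lemma set_integrable_continuous_mult:
  fixes g h :: "real \<Rightarrow> real"
  assumes g_int: "set_integrable lborel {a..b} g" and h_cont: "continuous_on {a..b} h"
  shows "set_integrable lborel {a..b} (\<lambda>x. h x * g x)"
proof -
  obtain B where B: "\<And>x. x \<in> {a..b} \<Longrightarrow> norm (h x) \<le> B"
    using compact_imp_bounded[OF compact_continuous_image[OF h_cont compact_Icc]]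
    unfolding bounded_iff by blast
  have m1: "(\<lambda>x. indicator {a..b} x *\<^sub>R h x) \<in> borel_measurable borel"
    by (rule borel_measurable_continuous_on_indicator[OF _ h_cont]) auto
  have m2: "(\<lambda>x. indicator {a..b} x *\<^sub>R g x) \<in> borel_measurable borel"
    using g_int unfolding set_integrable_def by (auto dest: borel_measurable_integrable)
  have "(\<lambda>x. indicator {a..b} x *\<^sub>R (h x * g x))
      = (\<lambda>x. (indicator {a..b} x *\<^sub>R h x) * (indicator {a..b} x *\<^sub>R g x))"
    by (auto simp: indicator_def)
  then have m: "set_borel_measurable lborel {a..b} (\<lambda>x. h x * g x)"
    unfolding set_borel_measurable_def using m1 m2 by (simp add: measurable_lborel1 borel_measurable_times)
  show ?thesis
  proof (rule set_integrable_bound[OF _ m])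
    show "set_integrable lborel {a..b} (\<lambda>x. B * g x)" using g_int by auto
    show "AE x in lborel. x \<in> {a..b} \<longrightarrow> norm (h x * g x) \<le> norm (B * g x)"
    proof (intro AE_I2 impI)
      fix x assume x: "x \<in> {a..b}"
      have "0 \<le> B" using B[OF x] by (meson norm_ge_zero order.trans)
      then show "norm (h x * g x) \<le> norm (B * g x)"
        using B[OF x] by (simp add: abs_mult mult_right_mono)
    qed
  qed
qed

lemma set_integral_square_le:
  fixes G :: "real \<Rightarrow> real"
  assumes pq: "p < q" and G_int: "set_integrable lborel {p..q} G"
    and G2_int: "set_integrable lborel {p..q} (\<lambda>u. (G u)\<^sup>2)"
  shows "(LINT u:{p..q}|lborel. G u)\<^sup>2 \<le> (q - p) * (LINT u:{p..q}|lborel. (G u)\<^sup>2)"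
proof -
  define I where "I = (LINT u:{p..q}|lborel. G u)"
  define m where "m = I / (q - p)"
  have const_int: "set_integrable lborel {p..q} (\<lambda>u. c)" for c :: real
    by (rule borel_integrable_atLeastAtMost') auto
  have "0 \<le> (LINT u:{p..q}|lborel. (G u - m)\<^sup>2)"
    unfolding set_lebesgue_integral_def by (rule Bochner_Integration.integral_nonneg) simp
  also have "\<dots> = (LINT u:{p..q}|lborel. (G u)\<^sup>2 - 2 * m * G u + m\<^sup>2)"
    by (simp add: power2_diff algebra_simps)
  also have "\<dots> = (LINT u:{p..q}|lborel. (G u)\<^sup>2) - 2 * m * I + m\<^sup>2 * (q - p)"
    using G_int G2_int const_int pq by (simp add: set_integral_diff set_integral_add I_def set_integral_const)
  also have "\<dots> = (LINT u:{p..q}|lborel. (G u)\<^sup>2) - I\<^sup>2 / (q - p)"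
  proof -
    define d where "d = q - p"
    have "- 2 * m * I + m\<^sup>2 * d = - I\<^sup>2 / d"
      using pq by (simp add: m_def d_def[symmetric] field_simps power2_eq_square)
    then show ?thesis by (simp add: d_def)
  qed
  finally show ?thesis using pq by (simp add: I_def field_simps)
qed

lemma x_cos_le_sin:
  fixes x :: real
  assumes "0 \<le> x" "x \<le> pi / 2"
  shows "x * cos x \<le> sin x"
proof -
  have "(\<lambda>t. sin t - t * cos t) 0 \<le> (\<lambda>t. sin t - t * cos t) x"
  proof (rule DERIV_nonneg_imp_nondecreasing[of 0 x])
    fix t assume t: "0 \<le> t" "t \<le> x"
    have "((\<lambda>t. sin t - t * cos t) has_real_derivative t * sin t) (at t)"
      by (auto intro!: derivative_eq_intros)
    moreover have "0 \<le> t * sin t" using t assms by (simp add: sin_ge_zero)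
    ultimately show "\<exists>y. ((\<lambda>t. sin t - t * cos t) has_real_derivative y) (at t) \<and> 0 \<le> y" by blast
  qed (use assms in auto)
  then show ?thesis by simp
qed

text \<open>The primitive is clamped to \<open>[0, 1]\<close> so that it is continuous on the whole line.\<close>
definition cumulative_integral :: "(real \<Rightarrow> real) \<Rightarrow> real \<Rightarrow> real" where
  "cumulative_integral G w = (LINT u:{0..max 0 (min w 1)}|lborel. G u)"

lemma cumulative_integral_eq:
  "0 \<le> w \<Longrightarrow> w \<le> 1 \<Longrightarrow> cumulative_integral G w = (LINT u:{0..w}|lborel. G u)"
  by (simp add: cumulative_integral_def)

lemma cumulative_integral_0 [simp]: "cumulative_integral G 0 = 0"
proof -
  have "(LINT u:{0}|lborel. G u) = (LINT u:{}|lborel. G u)"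
    by (rule set_integral_discrete_difference[where X = "{0}"]) auto
  then show ?thesis by (simp add: cumulative_integral_def set_lebesgue_integral_def)
qed

lemma cumulative_integral_1: "cumulative_integral G 1 = (LINT u:{0..1}|lborel. G u)"
  by (simp add: cumulative_integral_def)

lemma continuous_on_cumulative_integral:
  assumes "set_integrable lborel {0..1} G"
  shows "continuous_on S (cumulative_integral G)"
proof -
  have "G integrable_on {0..1}" using set_borel_integral_eq_integral(1)[OF assms] .
  then have "continuous_on {0..1} (\<lambda>t. integral {0..t} G)" by (rule indefinite_integral_continuous_1)
  then have cont01: "continuous_on {0..1} (\<lambda>t. LINT u:{0..t}|lborel. G u)"
    by (rule continuous_on_eq)
       (auto intro!: set_borel_integral_eq_integral(2)[symmetric] set_integrable_subset[OF assms])
  have "continuous_on UNIV ((\<lambda>t. LINT u:{0..t}|lborel. G u) \<circ> (\<lambda>w. max 0 (min w 1)))"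
    by (rule continuous_on_compose[OF _ continuous_on_subset[OF cont01]]) (auto intro!: continuous_intros)
  then have "continuous_on UNIV (cumulative_integral G)"
    by (simp add: cumulative_integral_def o_def)
  then show ?thesis by (rule continuous_on_subset) simp
qed

lemma cumulative_integral_has_left_derivative:
  assumes G_int: "set_integrable lborel {0..1} G"
    and x: "0 < x" "x \<le> 1" and a: "0 \<le> a" and G_cont: "continuous (at x within {0..x}) G"
  shows "(cumulative_integral G has_real_derivative G x) (at x within {a..x})"
proof -
  have G_int': "set_integrable lborel {0..w} G" if "w \<le> 1" for w
    by (rule set_integrable_subset[OF G_int]) (use that in auto)
  have "G integrable_on {0..x}" using set_borel_integral_eq_integral(1)[OF G_int'[OF x(2)]] .
  then have "((\<lambda>u. integral {0..u} G) has_vector_derivative G x) (at x within {0..x} - {})"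
    by (rule integral_has_vector_derivative_continuous_at) (use x G_cont in auto)
  then have "((\<lambda>u. integral {0..u} G) has_real_derivative G x) (at x within {0..x})"
    by (simp add: has_real_derivative_iff_has_vector_derivative)
  then have "(cumulative_integral G has_real_derivative G x) (at x within {0..x})"
  proof (rule has_field_derivative_transform_within[of _ _ _ _ 1])
    fix u assume "u \<in> {0..x}"
    then show "integral {0..u} G = cumulative_integral G u"
      using x set_borel_integral_eq_integral(2)[OF G_int'[of u]] by (simp add: cumulative_integral_eq)
  qed (use x in auto)
  then show ?thesis by (rule DERIV_subset) (use x a in auto)
qed

lemma tendsto_set_integral_Icc:
  fixes h :: "real \<Rightarrow> real"
  assumes h_int: "set_integrable lborel {0..1} h"
    and a: "a \<longlonglongrightarrow> 0" and b: "b \<longlonglongrightarrow> 1" and ab: "\<And>n. 0 \<le> a n \<and> a n \<le> b n \<and> b n \<le> 1"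
  shows "(\<lambda>n. LINT u:{a n..b n}|lborel. h u) \<longlonglongrightarrow> (LINT u:{0..1}|lborel. h u)"
proof -
  have "(LINT u:{a n..b n}|lborel. h u) = cumulative_integral h (b n) - cumulative_integral h (a n)" for n
    using set_integral_Icc_combine[OF set_integrable_subset[OF h_int], of 0 "b n" "a n"] ab[of n]
    by (simp add: cumulative_integral_eq)
  moreover have "(\<lambda>n. cumulative_integral h (b n) - cumulative_integral h (a n))
      \<longlonglongrightarrow> cumulative_integral h 1 - cumulative_integral h 0"
    using continuous_on_cumulative_integral[OF h_int, of UNIV]
    by (intro tendsto_diff continuous_on_tendsto_compose[OF _ b] continuous_on_tendsto_compose[OF _ a]) auto
  ultimately show ?thesis by (simp add: cumulative_integral_1)
qed

section \<open>Wirtinger's inequality\<close>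

lemma sin_pi_pos: "0 < u \<Longrightarrow> u < 1 \<Longrightarrow> 0 < sin (pi * u)"
  by (intro sin_gt_zero) auto

lemma square_integral_cot_le:
  fixes G :: "real \<Rightarrow> real"
  assumes r: "0 < r" "r \<le> 1/2"
    and G_int: "set_integrable lborel {c..c + r} G"
    and G2_int: "set_integrable lborel {c..c + r} (\<lambda>u. (G u)\<^sup>2)"
  shows "\<bar>(LINT u:{c..c + r}|lborel. G u)\<^sup>2 * cot (pi * r)\<bar> \<le> (LINT u:{c..c + r}|lborel. (G u)\<^sup>2) / pi"
proof -
  have pr: "0 < pi * r" "pi * r \<le> pi / 2" using r by auto
  have sin_pos: "0 < sin (pi * r)" using pr pi_gt_zero by (intro sin_gt_zero) linarith+
  have cos_nn: "0 \<le> cos (pi * r)" using pr pi_gt_zero by (intro cos_ge_zero) linarith+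
  have "pi * r * cos (pi * r) \<le> sin (pi * r)" using pr by (intro x_cos_le_sin) linarith+
  then have cot: "0 \<le> cot (pi * r)" "cot (pi * r) \<le> 1 / (pi * r)"
    using r sin_pos cos_nn by (auto simp: cot_def field_simps)
  have "(LINT u:{c..c + r}|lborel. G u)\<^sup>2 * cot (pi * r)
      \<le> (r * (LINT u:{c..c + r}|lborel. (G u)\<^sup>2)) * (1 / (pi * r))"
    using set_integral_square_le[of c "c + r", OF _ G_int G2_int] r cot
    by (intro mult_mono) (auto intro: order_trans[OF zero_le_power2])
  then show ?thesis using r cot by (simp add: abs_mult)
qed

lemma square_sub_cot_weight:
  fixes s co g v :: real
  assumes s: "s \<noteq> 0" and unit: "co * co + s * s = 1"
  shows "(g - pi * v * (co / s))\<^sup>2 = g\<^sup>2 - pi\<^sup>2 * v\<^sup>2 - pi * (2 * v * (co / s) * g - pi * v\<^sup>2 / s\<^sup>2)"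
proof -
  have eq1: "(g - pi * v * (co / s))\<^sup>2 = g\<^sup>2 - 2 * pi * v * g * co / s + pi\<^sup>2 * v\<^sup>2 * (co * co) / (s * s)"
    using s by (simp add: field_simps power2_eq_square)
  have eq2: "g\<^sup>2 - pi\<^sup>2 * v\<^sup>2 - pi * (2 * v * (co / s) * g - pi * v\<^sup>2 / s\<^sup>2)
      = g\<^sup>2 - 2 * pi * v * g * co / s + pi\<^sup>2 * v\<^sup>2 * (1 - s * s) / (s * s)"
    using s by (simp add: field_simps power2_eq_square)
  have "co * co = 1 - s * s" using unit by simp
  then show ?thesis using eq1 eq2 by simp
qed

text \<open>The intervals \<open>[margin n, 1 - margin n]\<close> exhaust \<open>(0, 1)\<close> and stay away from the poles of
  \<open>cot(\<pi> u)\<close>.\<close>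
definition margin :: "nat \<Rightarrow> real" where "margin n = 1 / (real n + 2)"

lemma margin_bounds: "0 < margin n" "margin n \<le> 1/2"
  by (auto simp: margin_def field_simps)

lemma margin_antimono: "m \<le> n \<Longrightarrow> margin n \<le> margin m"
  by (simp add: margin_def frac_le)

lemma margin_tendsto_0: "margin \<longlonglongrightarrow> 0"
  unfolding margin_def by real_asymp

locale square_integrable_left_continuous =
  fixes G :: "real \<Rightarrow> real"
  assumes G_measurable [measurable]: "G \<in> borel_measurable borel"
    and G_integrable: "set_integrable lborel {0..1} G"
    and G_square_integrable: "set_integrable lborel {0..1} (\<lambda>u. (G u)\<^sup>2)"
    and G_left_continuous: "\<And>x. x \<in> {0<..<1} \<Longrightarrow> continuous (at x within {0..x}) G"
begin

abbreviation V :: "real \<Rightarrow> real" where "V \<equiv> cumulative_integral G"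

lemma continuous_on_V [continuous_intros]: "continuous_on S V"
  using G_integrable by (rule continuous_on_cumulative_integral)

lemma isCont_V [continuous_intros]: "isCont V x"
  using continuous_on_V[of UNIV] by (simp add: continuous_on_eq_continuous_at)

lemma V_has_left_derivative:
  "x \<in> {0<..<1} \<Longrightarrow> 0 \<le> a \<Longrightarrow> (V has_real_derivative G x) (at x within {a..x})"
  using G_left_continuous by (intro cumulative_integral_has_left_derivative G_integrable) auto

lemma G_integrable_on: "0 \<le> p \<Longrightarrow> q \<le> 1 \<Longrightarrow> set_integrable lborel {p..q} G"
  by (rule set_integrable_subset[OF G_integrable]) auto

lemma G_square_integrable_on: "0 \<le> p \<Longrightarrow> q \<le> 1 \<Longrightarrow> set_integrable lborel {p..q} (\<lambda>u. (G u)\<^sup>2)"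
  by (rule set_integrable_subset[OF G_square_integrable]) auto

lemma G_affine_left_continuous:
  assumes x: "x \<in> {0<..<1}" and p: "0 \<le> p" and a: "isCont a x" and b: "isCont b x"
  shows "continuous (at x within {p..x}) (\<lambda>u. a u * G u + b u)"
proof -
  have "continuous (at x within {p..x}) G"
    using G_left_continuous[OF x] by (rule continuous_within_subset) (use p in auto)
  then show ?thesis
    using continuous_at_imp_continuous_within[OF a] continuous_at_imp_continuous_within[OF b]
    by (intro continuous_add continuous_mult)
qed

definition defect :: "real \<Rightarrow> real \<Rightarrow> real" where
  "defect p q = (LINT u:{p..q}|lborel. (G u - pi * V u * cot (pi * u))\<^sup>2)"

lemma defect_nonneg: "0 \<le> defect p q"
  unfolding defect_def set_lebesgue_integral_def by (rule Bochner_Integration.integral_nonneg) simp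

lemma defect_integrable:
  assumes "0 < p" "q < 1"
  shows "set_integrable lborel {p..q} (\<lambda>u. (G u - pi * V u * cot (pi * u))\<^sup>2)"
proof -
  have cot_cont: "continuous_on {p..q} (\<lambda>u. cot (pi * u))"
    using assms sin_pi_pos by (intro continuous_intros) (auto simp: less_imp_neq[symmetric])
  have "set_integrable lborel {p..q} (\<lambda>u. (-2 * pi * V u * cot (pi * u)) * G u)"
    using assms by (intro set_integrable_continuous_mult G_integrable_on continuous_intros cot_cont) auto
  moreover have "set_integrable lborel {p..q} (\<lambda>u. (pi * V u * cot (pi * u))\<^sup>2)"
    by (intro borel_integrable_atLeastAtMost' continuous_intros cot_cont)
  ultimately have "set_integrable lborel {p..q}
      (\<lambda>u. (G u)\<^sup>2 + ((-2 * pi * V u * cot (pi * u)) * G u + (pi * V u * cot (pi * u))\<^sup>2))"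
    using assms G_square_integrable_on by (intro set_integral_add(1)) auto
  then show ?thesis by (simp add: power2_diff algebra_simps)
qed

lemma set_integral_V_square_cot:
  assumes pq: "0 < p" "p \<le> q" "q < 1"
  defines "g \<equiv> \<lambda>u. 2 * V u * cot (pi * u) * G u - pi * (V u)\<^sup>2 / (sin (pi * u))\<^sup>2"
  shows "set_integrable lborel {p..q} g"
    and "(LINT u:{p..q}|lborel. g u) = (V q)\<^sup>2 * cot (pi * q) - (V p)\<^sup>2 * cot (pi * p)"
proof -
  have sin_pos: "0 < sin (pi * u)" if "u \<in> {p..q}" for u
    using that pq by (intro sin_pi_pos) auto
  have cot_cont: "continuous_on {p..q} (\<lambda>u. cot (pi * u))"
    using sin_pos by (intro continuous_intros) (auto simp: less_imp_neq[symmetric])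
  have "set_integrable lborel {p..q}
      (\<lambda>u. (2 * V u * cot (pi * u)) * G u - pi * (V u)\<^sup>2 / (sin (pi * u))\<^sup>2)"
    using pq
    by (intro set_integral_diff(1) set_integrable_continuous_mult G_integrable_on
        borel_integrable_atLeastAtMost' continuous_intros cot_cont) (auto dest: sin_pos)
  then show g_int: "set_integrable lborel {p..q} g" by (simp add: g_def)
  show "(LINT u:{p..q}|lborel. g u) = (V q)\<^sup>2 * cot (pi * q) - (V p)\<^sup>2 * cot (pi * p)"
  proof (rule set_integral_eq_diff_left_deriv[OF pq(2) g_int])
    fix x assume x: "x \<in> {p<..q}"
    then have x01: "x \<in> {0<..<1}" and sx: "sin (pi * x) \<noteq> 0" using pq sin_pos[of x] by auto
    have "continuous (at x within {p..x})
        (\<lambda>u. (2 * V u * cot (pi * u)) * G u + - (pi * (V u)\<^sup>2 / (sin (pi * u))\<^sup>2))"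
      using x01 pq sx by (intro G_affine_left_continuous continuous_intros) auto
    then show "continuous (at x within {p..x}) g" by (simp add: g_def)
    have "((\<lambda>u. cot (pi * u)) has_real_derivative - inverse ((sin (pi * x))\<^sup>2) * pi) (at x)"
      by (rule DERIV_chain2[OF DERIV_cot[OF sx] DERIV_cmult_Id])
    then have "((\<lambda>u. cot (pi * u)) has_real_derivative - inverse ((sin (pi * x))\<^sup>2) * pi) (at x within {p..x})"
      by (rule DERIV_subset) simp
    from DERIV_mult[OF DERIV_power[OF V_has_left_derivative[OF x01 less_imp_le[OF pq(1)]], of 2] this]
    show "((\<lambda>u. (V u)\<^sup>2 * cot (pi * u)) has_real_derivative g x) (at x within {p..x})"
      by (rule DERIV_cong) (simp add: g_def algebra_simps divide_inverse)
  qed (intro continuous_intros cot_cont)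
qed

text \<open>The defect is the square completed by the weight \<open>\<pi> cot(\<pi> u)\<close>, the logarithmic derivative of
  the extremal function \<open>sin(\<pi> u)\<close>; integrating by parts leaves only the boundary term \<open>V\<^sup>2 cot\<close>.\<close>
lemma defect_eq:
  assumes pq: "0 < p" "p \<le> q" "q < 1"
  shows "defect p q = (LINT u:{p..q}|lborel. (G u)\<^sup>2) - pi\<^sup>2 * (LINT u:{p..q}|lborel. (V u)\<^sup>2)
      - pi * ((V q)\<^sup>2 * cot (pi * q) - (V p)\<^sup>2 * cot (pi * p))"
proof -
  define g where "g u = 2 * V u * cot (pi * u) * G u - pi * (V u)\<^sup>2 / (sin (pi * u))\<^sup>2" for u
  have "(G u - pi * V u * cot (pi * u))\<^sup>2 = (G u)\<^sup>2 - pi\<^sup>2 * (V u)\<^sup>2 - pi * g u"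
    if "u \<in> {p..q}" for u
    using sin_pi_pos[of u] that pq sin_cos_squared_add[of "pi * u"]
    unfolding g_def cot_def by (intro square_sub_cot_weight) (auto simp: power2_eq_square)
  then have "defect p q = (LINT u:{p..q}|lborel. (G u)\<^sup>2 - pi\<^sup>2 * (V u)\<^sup>2 - pi * g u)"
    unfolding defect_def by (intro set_lebesgue_integral_cong) auto
  moreover have "set_integrable lborel {p..q} (\<lambda>u. pi\<^sup>2 * (V u)\<^sup>2)"
    by (intro borel_integrable_atLeastAtMost' continuous_intros)
  ultimately show ?thesis
    using pq G_square_integrable_on[of p q] set_integral_V_square_cot[OF pq, folded g_def]
    by (simp add: set_integral_diff)
qed

lemma boundary_term_tendsto_0:
  assumes a: "a \<longlonglongrightarrow> 0" and a_bounds: "\<And>n. 0 < a n \<and> a n \<le> 1/2"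
  shows "(\<lambda>n. (V (a n))\<^sup>2 * cot (pi * a n)) \<longlonglongrightarrow> 0"
proof (rule Lim_null_comparison)
  let ?C = "cumulative_integral (\<lambda>u. (G u)\<^sup>2)"
  have "norm ((V (a n))\<^sup>2 * cot (pi * a n)) \<le> ?C (a n) / pi" for n
    using square_integral_cot_le[of "a n" 0 G] a_bounds[of n] G_integrable_on G_square_integrable_on
    by (simp add: cumulative_integral_eq)
  then show "\<forall>\<^sub>F n in sequentially. norm ((V (a n))\<^sup>2 * cot (pi * a n)) \<le> ?C (a n) / pi"
    by (simp add: always_eventually)
  have "(\<lambda>n. ?C (a n) / pi) \<longlonglongrightarrow> ?C 0 / pi"
    using continuous_on_cumulative_integral[OF G_square_integrable, of UNIV]
    by (intro tendsto_intros continuous_on_tendsto_compose[OF _ a]) auto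
  then show "(\<lambda>n. ?C (a n) / pi) \<longlonglongrightarrow> 0" by simp
qed

lemma boundary_term_tendsto_1:
  assumes mean_zero: "(LINT u:{0..1}|lborel. G u) = 0"
    and a: "a \<longlonglongrightarrow> 0" and a_bounds: "\<And>n. 0 < a n \<and> a n \<le> 1/2"
  shows "(\<lambda>n. (V (1 - a n))\<^sup>2 * cot (pi * (1 - a n))) \<longlonglongrightarrow> 0"
proof (rule Lim_null_comparison)
  let ?C = "cumulative_integral (\<lambda>u. (G u)\<^sup>2)"
  have "V (1 - a n) = - (LINT u:{1 - a n..1}|lborel. G u)"
    and "(LINT u:{1 - a n..1}|lborel. (G u)\<^sup>2) = ?C 1 - ?C (1 - a n)" for n
    using set_integral_Icc_combine[OF G_integrable, of "1 - a n"]
      set_integral_Icc_combine[OF G_square_integrable, of "1 - a n"] mean_zero a_bounds[of n]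
    by (simp_all add: cumulative_integral_eq)
  moreover have "cot (pi * (1 - r)) = - cot (pi * r)" for r
    by (simp add: cot_def right_diff_distrib sin_diff cos_diff)
  ultimately have "norm ((V (1 - a n))\<^sup>2 * cot (pi * (1 - a n))) \<le> (?C 1 - ?C (1 - a n)) / pi" for n
    using square_integral_cot_le[of "a n" "1 - a n" G] a_bounds[of n] G_integrable_on G_square_integrable_on
    by (simp add: abs_mult)
  then show "\<forall>\<^sub>F n in sequentially. norm ((V (1 - a n))\<^sup>2 * cot (pi * (1 - a n)))
      \<le> (?C 1 - ?C (1 - a n)) / pi"
    by (simp add: always_eventually)
  have "(\<lambda>n. (?C 1 - ?C (1 - a n)) / pi) \<longlonglongrightarrow> (?C 1 - ?C (1 - 0)) / pi"
    using continuous_on_cumulative_integral[OF G_square_integrable, of UNIV]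
    by (intro tendsto_intros continuous_on_tendsto_compose[OF _ tendsto_diff[OF tendsto_const a]]) auto
  then show "(\<lambda>n. (?C 1 - ?C (1 - a n)) / pi) \<longlonglongrightarrow> 0" by simp
qed

lemma defect_mono:
  assumes "0 < p'" "p' \<le> p" "q \<le> q'" "q' < 1"
  shows "defect p q \<le> defect p' q'"
  unfolding defect_def set_lebesgue_integral_def
proof (rule integral_mono)
  show "integrable lborel (\<lambda>u. indicat_real {p..q} u *\<^sub>R (G u - pi * V u * cot (pi * u))\<^sup>2)"
    using defect_integrable[of p q] assms unfolding set_integrable_def by simp
  show "integrable lborel (\<lambda>u. indicat_real {p'..q'} u *\<^sub>R (G u - pi * V u * cot (pi * u))\<^sup>2)"
    using defect_integrable[of p' q'] assms unfolding set_integrable_def by simp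
qed (use assms in \<open>auto simp: indicator_def\<close>)

lemma defect_tendsto:
  assumes mean_zero: "(LINT u:{0..1}|lborel. G u) = 0"
  shows "(\<lambda>n. defect (margin n) (1 - margin n))
    \<longlonglongrightarrow> (LINT u:{0..1}|lborel. (G u)\<^sup>2) - pi\<^sup>2 * (LINT u:{0..1}|lborel. (V u)\<^sup>2)"
proof -
  have b_lim: "(\<lambda>n. 1 - margin n) \<longlonglongrightarrow> 1"
    using tendsto_diff[OF tendsto_const margin_tendsto_0, of 1] by simp
  have "0 \<le> margin n \<and> margin n \<le> 1 - margin n \<and> 1 - margin n \<le> 1" for n
    using margin_bounds[of n] by auto
  note lim_int = tendsto_set_integral_Icc[OF _ margin_tendsto_0 b_lim this]
  have V2_int: "set_integrable lborel {0..1} (\<lambda>u. (V u)\<^sup>2)"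
    by (intro borel_integrable_atLeastAtMost' continuous_intros)
  have "defect (margin n) (1 - margin n) = (LINT u:{margin n..1 - margin n}|lborel. (G u)\<^sup>2)
      - pi\<^sup>2 * (LINT u:{margin n..1 - margin n}|lborel. (V u)\<^sup>2)
      - pi * ((V (1 - margin n))\<^sup>2 * cot (pi * (1 - margin n)) - (V (margin n))\<^sup>2 * cot (pi * margin n))"
    for n
    using defect_eq[of "margin n" "1 - margin n"] margin_bounds[of n] by simp
  moreover have "(\<lambda>n. (LINT u:{margin n..1 - margin n}|lborel. (G u)\<^sup>2)
      - pi\<^sup>2 * (LINT u:{margin n..1 - margin n}|lborel. (V u)\<^sup>2)
      - pi * ((V (1 - margin n))\<^sup>2 * cot (pi * (1 - margin n)) - (V (margin n))\<^sup>2 * cot (pi * margin n)))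
    \<longlonglongrightarrow> (LINT u:{0..1}|lborel. (G u)\<^sup>2) - pi\<^sup>2 * (LINT u:{0..1}|lborel. (V u)\<^sup>2) - pi * (0 - 0)"
    using margin_bounds
    by (intro tendsto_intros lim_int G_square_integrable V2_int boundary_term_tendsto_0[OF margin_tendsto_0]
        boundary_term_tendsto_1[OF mean_zero margin_tendsto_0]) auto
  ultimately show ?thesis by simp
qed

lemma wirtinger_inequality:
  assumes mean_zero: "(LINT u:{0..1}|lborel. G u) = 0"
  shows "pi\<^sup>2 * (LINT u:{0..1}|lborel. (V u)\<^sup>2) \<le> (LINT u:{0..1}|lborel. (G u)\<^sup>2)"
  using LIMSEQ_le_const[OF defect_tendsto[OF mean_zero], of 0] defect_nonneg by auto

lemma wirtinger_equality_imp_cot_relation: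
  assumes mean_zero: "(LINT u:{0..1}|lborel. G u) = 0"
    and eq: "pi\<^sup>2 * (LINT u:{0..1}|lborel. (V u)\<^sup>2) = (LINT u:{0..1}|lborel. (G u)\<^sup>2)"
  shows "AE u in lborel. u \<in> {0<..<1} \<longrightarrow> G u = pi * V u * cot (pi * u)"
proof -
  define F where "F u = (G u - pi * V u * cot (pi * u))\<^sup>2" for u
  have F_int: "integrable lborel (\<lambda>u. indicator {margin n..1 - margin n} u *\<^sub>R F u)" for n
    using defect_integrable[of "margin n" "1 - margin n"] margin_bounds[of n]
    unfolding F_def[abs_def] set_integrable_def by simp
  have "(\<lambda>n. defect (margin n) (1 - margin n)) \<longlonglongrightarrow> 0"
    using defect_tendsto[OF mean_zero] eq by simp
  then have "defect (margin m) (1 - margin m) \<le> 0" for m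
  proof (rule LIMSEQ_le_const, intro exI allI impI)
    fix n assume "m \<le> n"
    then show "defect (margin m) (1 - margin m) \<le> defect (margin n) (1 - margin n)"
      using margin_bounds[of n] margin_bounds[of m] margin_antimono[of m n] by (intro defect_mono) auto
  qed
  then have "defect (margin n) (1 - margin n) = 0" for n using defect_nonneg by (meson antisym)
  then have "integral\<^sup>L lborel (\<lambda>u. indicator {margin n..1 - margin n} u *\<^sub>R F u) = 0" for n
    unfolding defect_def F_def set_lebesgue_integral_def by simp
  then have "AE u in lborel. indicator {margin n..1 - margin n} u *\<^sub>R F u = 0" for n
    using integral_nonneg_eq_0_iff_AE[OF F_int] by (simp add: F_def indicator_def)
  then have "AE u in lborel. u \<in> {margin n..1 - margin n} \<longrightarrow> F u = 0" for n
    by (rule eventually_mono) (auto simp: indicator_def)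
  then have "AE u in lborel. \<forall>n. u \<in> {margin n..1 - margin n} \<longrightarrow> F u = 0"
    unfolding AE_all_countable by blast
  then show ?thesis
  proof eventually_elim
    case (elim u)
    show ?case
    proof
      assume u: "u \<in> {0<..<1}"
      obtain n where "margin n < min u (1 - u)"
        using u order_tendstoD(2)[OF margin_tendsto_0, of "min u (1 - u)"]
        by (auto dest: eventually_happens)
      then show "G u = pi * V u * cot (pi * u)" using elim[rule_format, of n] by (simp add: F_def)
    qed
  qed
qed

lemma cot_relation_imp_V_div_sin_eq:
  assumes rel: "AE u in lborel. u \<in> {0<..<1} \<longrightarrow> G u = pi * V u * cot (pi * u)"
    and pq: "0 < p" "p \<le> q" "q < 1"
  shows "V q / sin (pi * q) = V p / sin (pi * p)"
proof -
  define \<psi> where "\<psi> u = V u / sin (pi * u)" for u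
  have sin_nz: "sin (pi * u) \<noteq> 0" if "u \<in> {p..q}" for u
    using sin_pi_pos[of u] that pq by auto
  define g where "g u = (G u - pi * V u * cot (pi * u)) / sin (pi * u)" for u
  have "(LINT u:{p..q}|lborel. g u) = \<psi> q - \<psi> p"
  proof (rule set_integral_eq_diff_left_deriv[OF pq(2)])
    have "set_integrable lborel {p..q} (\<lambda>u. (1 / sin (pi * u)) * G u - pi * V u * cot (pi * u) / sin (pi * u))"
      using sin_nz pq by (intro set_integral_diff(1) set_integrable_continuous_mult G_integrable_on
          borel_integrable_atLeastAtMost' continuous_intros) auto
    then show "set_integrable lborel {p..q} g" by (simp add: g_def[abs_def] diff_divide_distrib)
    show "continuous_on {p..q} \<psi>" unfolding \<psi>_def[abs_def] using sin_nz by (intro continuous_intros) auto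
    fix x assume x: "x \<in> {p<..q}"
    then have x01: "x \<in> {0<..<1}" and sx: "sin (pi * x) \<noteq> 0" using pq sin_nz[of x] by auto
    have "continuous (at x within {p..x})
        (\<lambda>u. (1 / sin (pi * u)) * G u + - (pi * V u * cot (pi * u) / sin (pi * u)))"
      using x01 pq sx by (intro G_affine_left_continuous continuous_intros) auto
    then show "continuous (at x within {p..x}) g" by (simp add: g_def[abs_def] diff_divide_distrib)
    have "((\<lambda>u. sin (pi * u)) has_real_derivative cos (pi * x) * pi) (at x within {p..x})"
      by (auto intro!: derivative_eq_intros)
    from DERIV_divide[OF V_has_left_derivative[OF x01 less_imp_le[OF pq(1)]] this sx]
    show "(\<psi> has_real_derivative g x) (at x within {p..x})"
      unfolding \<psi>_def[abs_def]
      by (rule DERIV_cong) (use sx in \<open>simp add: g_def cot_def field_simps power2_eq_square\<close>)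
  qed
  moreover have "(LINT u:{p..q}|lborel. g u) = (LINT u:{p..q}|lborel. 0)"
  proof (rule set_lebesgue_integral_cong_AE)
    have [measurable]: "V \<in> borel_measurable borel"
      by (intro borel_measurable_continuous_onI continuous_on_V)
    show "g \<in> borel_measurable lborel"
      unfolding measurable_lborel1 g_def[abs_def] cot_def by measurable
    show "AE u\<in>{p..q} in lborel. g u = 0"
      using rel by eventually_elim (use pq in \<open>auto simp: g_def\<close>)
  qed auto
  ultimately show ?thesis by (simp add: \<psi>_def)
qed

lemma cot_relation_imp_sin:
  assumes rel: "AE u in lborel. u \<in> {0<..<1} \<longrightarrow> G u = pi * V u * cot (pi * u)"
  shows "\<exists>k. \<forall>u\<in>{0<..<1}. V u = k * sin (pi * u)"
proof -
  have "V u = V (1/2) * sin (pi * u)" if u: "u \<in> {0<..<1}" for u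
  proof -
    have "V u / sin (pi * u) = V (1/2) / sin (pi * (1/2))"
      using cot_relation_imp_V_div_sin_eq[OF rel, of u "1/2"] cot_relation_imp_V_div_sin_eq[OF rel, of "1/2" u] u
      by (cases "u \<le> 1/2") auto
    then show ?thesis using sin_pi_pos[of u] u by (simp add: field_simps)
  qed
  then show ?thesis by blast
qed

lemma wirtinger_equality:
  assumes mean_zero: "(LINT u:{0..1}|lborel. G u) = 0"
    and eq: "pi\<^sup>2 * (LINT u:{0..1}|lborel. (V u)\<^sup>2) = (LINT u:{0..1}|lborel. (G u)\<^sup>2)"
  shows "\<exists>k. AE u in lborel. u \<in> {0<..<1} \<longrightarrow> G u = k * cos (pi * u)"
proof -
  note rel = wirtinger_equality_imp_cot_relation[OF mean_zero eq]
  obtain k where k: "\<And>u. u \<in> {0<..<1} \<Longrightarrow> V u = k * sin (pi * u)"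
    using cot_relation_imp_sin[OF rel] by blast
  have "AE u in lborel. u \<in> {0<..<1} \<longrightarrow> G u = pi * k * cos (pi * u)"
    using rel by eventually_elim (use k sin_pi_pos in \<open>force simp: cot_def\<close>)
  then show ?thesis by blast
qed

end

section \<open>Variance of the second primitive\<close>

lemma set_integral_centered_square:
  fixes h :: "real \<Rightarrow> real"
  assumes h_int: "set_integrable lborel {0..1} h" and h2_int: "set_integrable lborel {0..1} (\<lambda>u. (h u)\<^sup>2)"
  defines "m \<equiv> LINT u:{0..1}|lborel. h u"
  shows "(LINT u:{0..1}|lborel. (h u - m)\<^sup>2) = (LINT u:{0..1}|lborel. (h u)\<^sup>2) - m\<^sup>2"
proof -
  have const_int: "set_integrable lborel {0..1::real} (\<lambda>u. c)" for c :: real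
    by (rule borel_integrable_atLeastAtMost') auto
  have "(LINT u:{0..1}|lborel. (h u - m)\<^sup>2) = (LINT u:{0..1}|lborel. (h u)\<^sup>2 - 2 * m * h u + m\<^sup>2)"
    by (simp add: power2_diff algebra_simps)
  also have "\<dots> = (LINT u:{0..1}|lborel. (h u)\<^sup>2) - 2 * m * m + m\<^sup>2"
    using h_int h2_int const_int by (simp add: set_integral_diff set_integral_add set_integral_const m_def)
  finally show ?thesis by (simp add: power2_eq_square)
qed

lemma continuous_square_integrable_left_continuous:
  assumes "continuous_on UNIV H"
  shows "square_integrable_left_continuous H"
proof
  show "H \<in> borel_measurable borel" using assms by (rule borel_measurable_continuous_onI)
  have cont: "continuous_on {0..1} H" using assms by (rule continuous_on_subset) simp
  show "set_integrable lborel {0..1} H"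
    by (rule borel_integrable_atLeastAtMost'[OF cont])
  show "set_integrable lborel {0..1} (\<lambda>u. (H u)\<^sup>2)"
    by (rule borel_integrable_atLeastAtMost'[OF continuous_on_power[OF cont]])
  show "continuous (at x within {0..x}) H" for x
    using assms unfolding continuous_on_eq_continuous_at[OF open_UNIV]
    by (blast intro: continuous_at_imp_continuous_within)
qed

lemma square_integral_eq_neg_primitive_mult:
  fixes H V :: "real \<Rightarrow> real"
  assumes H_cont: "continuous_on UNIV H" and V_cont: "continuous_on UNIV V"
    and H_deriv: "\<And>x. x \<in> {0<..1} \<Longrightarrow> (H has_real_derivative V x) (at x within {0..x})"
    and H_mean: "(LINT u:{0..1}|lborel. H u) = 0"
  shows "(LINT u:{0..1}|lborel. (H u)\<^sup>2) = - (LINT u:{0..1}|lborel. cumulative_integral H u * V u)"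
proof -
  define \<Phi> where "\<Phi> = cumulative_integral H"
  interpret H: square_integrable_left_continuous H
    using H_cont by (rule continuous_square_integrable_left_continuous)
  have isCont_simps: "isCont V x" "isCont H x" "isCont \<Phi> x" for x
  proof -
    show "isCont V x" "isCont H x"
      using V_cont H_cont unfolding continuous_on_eq_continuous_at[OF open_UNIV] by auto
    show "isCont \<Phi> x" unfolding \<Phi>_def by (rule H.isCont_V)
  qed
  have cont: "continuous_on S V" "continuous_on S H" "continuous_on S \<Phi>" for S
    using isCont_simps by (auto intro!: continuous_at_imp_continuous_on)
  have deriv: "((\<lambda>u. \<Phi> u * H u) has_real_derivative (H x)\<^sup>2 + \<Phi> x * V x) (at x within {0..x})"
    if x: "x \<in> {0<..1}" for x
  proof -
    have "(\<Phi> has_real_derivative H x) (at x within {0..x})"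
      unfolding \<Phi>_def using x continuous_at_imp_continuous_within[OF isCont_simps(2)]
      by (intro cumulative_integral_has_left_derivative H.G_integrable) auto
    from DERIV_mult[OF this H_deriv[OF x]] show ?thesis
      by (rule DERIV_cong) (simp add: power2_eq_square algebra_simps)
  qed
  have "continuous (at u within S) (\<lambda>u. (H u)\<^sup>2 + \<Phi> u * V u)" for u S
    by (rule continuous_at_imp_continuous_within) (intro isCont_add isCont_power isCont_mult isCont_simps)
  then have "(LINT u:{0..1}|lborel. (H u)\<^sup>2 + \<Phi> u * V u) = \<Phi> 1 * H 1 - \<Phi> 0 * H 0"
    by (intro set_integral_eq_diff_left_deriv[OF _ _ _ _ deriv] borel_integrable_atLeastAtMost'
        continuous_on_add continuous_on_power continuous_on_mult cont) auto
  moreover have "\<Phi> 0 = 0" "\<Phi> 1 = 0" using H_mean by (simp_all add: \<Phi>_def cumulative_integral_1)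
  moreover have "set_integrable lborel {0..1} (\<lambda>u. (H u)\<^sup>2)" "set_integrable lborel {0..1} (\<lambda>u. \<Phi> u * V u)"
    by (intro borel_integrable_atLeastAtMost' continuous_on_mult continuous_on_power cont)+
  ultimately show ?thesis by (simp add: set_integral_add \<Phi>_def eq_neg_iff_add_eq_0)
qed

lemma set_integral_neg_mult_le:
  fixes \<Phi> V :: "real \<Rightarrow> real"
  assumes cont: "continuous_on {0..1} \<Phi>" "continuous_on {0..1} V" and t: "t > 0"
  shows "(LINT u:{0..1}|lborel. - (\<Phi> u * V u))
    \<le> t / 2 * (LINT u:{0..1}|lborel. (\<Phi> u)\<^sup>2) + (LINT u:{0..1}|lborel. (V u)\<^sup>2) / (2 * t)"
proof -
  have "(LINT u:{0..1}|lborel. - (\<Phi> u * V u))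
      \<le> (LINT u:{0..1}|lborel. t / 2 * (\<Phi> u)\<^sup>2 + (V u)\<^sup>2 / (2 * t))"
  proof (rule set_integral_mono)
    fix u
    have "0 \<le> (t * \<Phi> u + V u)\<^sup>2 / t" using t by simp
    then show "- (\<Phi> u * V u) \<le> t / 2 * (\<Phi> u)\<^sup>2 + (V u)\<^sup>2 / (2 * t)"
      using t by (simp add: power2_eq_square field_simps)
  qed (use t in \<open>auto intro!: borel_integrable_atLeastAtMost' continuous_intros cont\<close>)
  also have "\<dots> = t / 2 * (LINT u:{0..1}|lborel. (\<Phi> u)\<^sup>2) + (LINT u:{0..1}|lborel. (V u)\<^sup>2) / (2 * t)"
    using t by (simp add: set_integral_add borel_integrable_atLeastAtMost' continuous_intros cont)
  finally show ?thesis .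
qed

text \<open>Wirtinger's inequality for the mean-centred primitive \<open>H = W - m\<close> of \<open>V\<close>, whose own primitive
  \<open>\<Phi>\<close> vanishes at both ends, combined with \<open>\<integral> H\<^sup>2 = - \<integral> \<Phi> V\<close> and
  \<open>- \<Phi> V \<le> \<pi>\<^sup>2 \<Phi>\<^sup>2/2 + V\<^sup>2/(2\<pi>\<^sup>2)\<close>.\<close>
lemma centered_primitive_wirtinger:
  fixes V :: "real \<Rightarrow> real"
  assumes V_cont: "continuous_on UNIV V"
  defines "m \<equiv> LINT u:{0..1}|lborel. cumulative_integral V u"
  shows "pi\<^sup>2 * (LINT u:{0..1}|lborel. (cumulative_integral V u - m)\<^sup>2) \<le> (LINT u:{0..1}|lborel. (V u)\<^sup>2)"
proof -
  have V_int: "set_integrable lborel {0..1} V"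
    using V_cont by (intro borel_integrable_atLeastAtMost') (rule continuous_on_subset, auto)
  define H where "H u = cumulative_integral V u - m" for u
  have H_cont: "continuous_on UNIV H"
    unfolding H_def[abs_def] by (intro continuous_intros continuous_on_cumulative_integral V_int)
  interpret H: square_integrable_left_continuous H
    using H_cont by (rule continuous_square_integrable_left_continuous)
  define \<Phi> where "\<Phi> = cumulative_integral H"
  have H_mean: "(LINT u:{0..1}|lborel. H u) = 0"
    using set_integral_diff(2)[OF borel_integrable_atLeastAtMost'[of 0 1 "cumulative_integral V"]
        borel_integrable_atLeastAtMost'[of 0 1 "\<lambda>_. m"]] continuous_on_cumulative_integral[OF V_int]
    by (simp add: H_def[abs_def] m_def set_integral_const)
  have H_deriv: "(H has_real_derivative V x) (at x within {0..x})" if x: "x \<in> {0<..1}" for x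
  proof -
    have "isCont V x" using V_cont by (simp add: continuous_on_eq_continuous_at[OF open_UNIV])
    then have "(cumulative_integral V has_real_derivative V x) (at x within {0..x})"
      using x continuous_at_imp_continuous_within by (intro cumulative_integral_has_left_derivative V_int) auto
    then show ?thesis unfolding H_def[abs_def] using DERIV_diff[OF _ DERIV_const] by fastforce
  qed
  have cont: "continuous_on {0..1} V" "continuous_on {0..1} \<Phi>"
    using V_cont H.continuous_on_V by (auto simp: \<Phi>_def intro: continuous_on_subset)
  have "set_integrable lborel {0..1} (\<lambda>u. \<Phi> u * V u)"
    by (intro borel_integrable_atLeastAtMost' continuous_on_mult cont)
  then have "(LINT u:{0..1}|lborel. (H u)\<^sup>2) = (LINT u:{0..1}|lborel. - (\<Phi> u * V u))"
    using square_integral_eq_neg_primitive_mult[OF H_cont V_cont H_deriv H_mean]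
    by (simp add: set_integral_uminus \<Phi>_def)
  also have "\<dots> \<le> pi\<^sup>2 / 2 * (LINT u:{0..1}|lborel. (\<Phi> u)\<^sup>2) + (LINT u:{0..1}|lborel. (V u)\<^sup>2) / (2 * pi\<^sup>2)"
    by (rule set_integral_neg_mult_le[OF cont(2,1)]) simp
  finally have "pi\<^sup>2 * (LINT u:{0..1}|lborel. (H u)\<^sup>2)
      \<le> pi\<^sup>2 * (pi\<^sup>2 * (LINT u:{0..1}|lborel. (\<Phi> u)\<^sup>2)) / 2 + (LINT u:{0..1}|lborel. (V u)\<^sup>2) / 2"
    by (simp add: field_simps)
  moreover have "pi\<^sup>2 * (pi\<^sup>2 * (LINT u:{0..1}|lborel. (\<Phi> u)\<^sup>2)) \<le> pi\<^sup>2 * (LINT u:{0..1}|lborel. (H u)\<^sup>2)"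
    unfolding \<Phi>_def by (rule mult_left_mono[OF H.wirtinger_inequality[OF H_mean]]) simp
  ultimately have "pi\<^sup>2 * (LINT u:{0..1}|lborel. (H u)\<^sup>2) \<le> (LINT u:{0..1}|lborel. (V u)\<^sup>2)"
    by linarith
  then show ?thesis by (simp add: H_def)
qed

context square_integrable_left_continuous
begin

abbreviation W :: "real \<Rightarrow> real" where "W \<equiv> cumulative_integral V"

lemma double_primitive_variance_le_primitive:
  "pi ^ 4 * ((LINT u:{0..1}|lborel. (W u)\<^sup>2) - (LINT u:{0..1}|lborel. W u)\<^sup>2)
    \<le> pi\<^sup>2 * (LINT u:{0..1}|lborel. (V u)\<^sup>2)"
proof -
  have W_cont: "continuous_on {0..1} W"
    by (intro continuous_on_cumulative_integral borel_integrable_atLeastAtMost' continuous_on_V)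
  have "pi\<^sup>2 * ((LINT u:{0..1}|lborel. (W u)\<^sup>2) - (LINT u:{0..1}|lborel. W u)\<^sup>2)
      \<le> (LINT u:{0..1}|lborel. (V u)\<^sup>2)"
    using centered_primitive_wirtinger[OF continuous_on_V]
      set_integral_centered_square[OF borel_integrable_atLeastAtMost'[OF W_cont]
        borel_integrable_atLeastAtMost'[OF continuous_on_power[OF W_cont]]]
    by simp
  from mult_left_mono[OF this, of "pi\<^sup>2"] show ?thesis
    by (simp add: power4_eq_xxxx power2_eq_square mult.assoc)
qed

lemma double_primitive_variance_eq_imp_cos:
  assumes mean_zero: "(LINT u:{0..1}|lborel. G u) = 0"
    and eq: "pi ^ 4 * ((LINT u:{0..1}|lborel. (W u)\<^sup>2) - (LINT u:{0..1}|lborel. W u)\<^sup>2)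
      = (LINT u:{0..1}|lborel. (G u)\<^sup>2)"
  shows "\<exists>k. AE u in lborel. u \<in> {0<..<1} \<longrightarrow> G u = k * cos (pi * u)"
proof (rule wirtinger_equality[OF mean_zero])
  show "pi\<^sup>2 * (LINT u:{0..1}|lborel. (V u)\<^sup>2) = (LINT u:{0..1}|lborel. (G u)\<^sup>2)"
    using double_primitive_variance_le_primitive wirtinger_inequality[OF mean_zero] eq by linarith
qed

end

lemma cumulative_integral_of_cos:
  fixes G :: "real \<Rightarrow> real"
  assumes G_eq: "\<And>u. u \<in> {0<..<1} \<Longrightarrow> G u = - c * cos (pi * u)" and w: "0 \<le> w" "w \<le> 1"
  shows "cumulative_integral G w = - c / pi * sin (pi * w)"
proof -
  have "cumulative_integral G w = (LINT u:{0<..<w}|lborel. - c * cos (pi * u))"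
    unfolding cumulative_integral_eq[OF w] set_integral_Icc_eq_Ioo(1)
    by (rule set_lebesgue_integral_cong) (use w G_eq in auto)
  also have "\<dots> = - c / pi * sin (pi * w) - (- c / pi * sin (pi * 0))"
    unfolding set_integral_Icc_eq_Ioo(1)[symmetric]
    by (rule set_integral_eq_diff_deriv[OF w(1)]) (auto intro!: continuous_intros derivative_eq_intros)
  finally show ?thesis by simp
qed

lemma double_cumulative_integral_of_cos:
  fixes G :: "real \<Rightarrow> real"
  assumes G_eq: "\<And>u. u \<in> {0<..<1} \<Longrightarrow> G u = - c * cos (pi * u)" and w: "0 \<le> w" "w \<le> 1"
  shows "cumulative_integral (cumulative_integral G) w = c / pi\<^sup>2 * (cos (pi * w) - 1)"
proof -
  have "cumulative_integral (cumulative_integral G) w = (LINT u:{0..w}|lborel. - c / pi * sin (pi * u))"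
    unfolding cumulative_integral_eq[OF w]
    by (rule set_lebesgue_integral_cong) (use w cumulative_integral_of_cos[OF G_eq] in auto)
  also have "\<dots> = c / pi\<^sup>2 * cos (pi * w) - c / pi\<^sup>2 * cos (pi * 0)"
    by (rule set_integral_eq_diff_deriv[OF w(1)])
      (auto intro!: continuous_intros derivative_eq_intros simp: power2_eq_square)
  finally show ?thesis by (simp add: right_diff_distrib)
qed

lemma set_integral_cos_square: "(LINT u:{0..1}|lborel. (cos (pi * u))\<^sup>2) = 1 / 2"
proof -
  define F where "F u = u / 2 + sin (2 * (pi * u)) / (4 * pi)" for u
  have "(LINT u:{0..1}|lborel. (cos (pi * u))\<^sup>2) = F 1 - F 0"
  proof (rule set_integral_eq_diff_deriv)
    fix x
    have "(F has_real_derivative 1 / 2 + cos (2 * (pi * x)) / 2) (at x)"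
      unfolding F_def by (auto intro!: derivative_eq_intros)
    moreover have "1 / 2 + cos (2 * (pi * x)) / 2 = (cos (pi * x))\<^sup>2"
      unfolding cos_double_cos[of "pi * x"] by (simp add: field_simps)
    ultimately show "(F has_real_derivative (cos (pi * x))\<^sup>2) (at x)" by simp
  qed (auto intro!: continuous_intros)
  then show ?thesis by (simp add: F_def)
qed

lemma set_integral_cos_minus_one_square: "(LINT u:{0..1}|lborel. (cos (pi * u) - 1)\<^sup>2) = 3 / 2"
proof -
  define F where "F u = 3 / 2 * u - 2 * sin (pi * u) / pi + sin (2 * (pi * u)) / (4 * pi)" for u
  have "(LINT u:{0..1}|lborel. (cos (pi * u) - 1)\<^sup>2) = F 1 - F 0"
  proof (rule set_integral_eq_diff_deriv)
    fix x
    have "(F has_real_derivative 3 / 2 - 2 * cos (pi * x) + cos (2 * (pi * x)) / 2) (at x)"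
      unfolding F_def by (auto intro!: derivative_eq_intros)
    moreover have "3 / 2 - 2 * cos (pi * x) + cos (2 * (pi * x)) / 2 = (cos (pi * x) - 1)\<^sup>2"
      unfolding cos_double_cos[of "pi * x"] by (simp add: power2_eq_square field_simps)
    ultimately show "(F has_real_derivative (cos (pi * x) - 1)\<^sup>2) (at x)" by simp
  qed (auto intro!: continuous_intros)
  then show ?thesis by (simp add: F_def)
qed

lemma cos_double_primitive_variance_eq:
  fixes G :: "real \<Rightarrow> real"
  assumes G_eq: "\<And>u. u \<in> {0<..<1} \<Longrightarrow> G u = - c * cos (pi * u)"
  defines "W \<equiv> cumulative_integral (cumulative_integral G)"
  shows "pi ^ 4 * ((LINT u:{0..1}|lborel. (W u)\<^sup>2) - (LINT u:{0..1}|lborel. W u)\<^sup>2)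
    = (LINT u:{0..1}|lborel. (G u)\<^sup>2)"
proof -
  have W_eq: "u \<in> {0..1} \<Longrightarrow> W u = c / pi\<^sup>2 * (cos (pi * u) - 1)" for u
    unfolding W_def using double_cumulative_integral_of_cos[OF G_eq] by auto
  have "(LINT u:{0..1}|lborel. W u) = (LINT u:{0..1}|lborel. c / pi\<^sup>2 * (cos (pi * u) - 1))"
    by (rule set_lebesgue_integral_cong) (auto simp: W_eq)
  also have "\<dots> = c / pi\<^sup>2 * (sin (pi * 1) / pi - 1) - c / pi\<^sup>2 * (sin (pi * 0) / pi - 0)"
    by (rule set_integral_eq_diff_deriv) (auto intro!: continuous_intros derivative_eq_intros simp: field_simps)
  finally have mean: "(LINT u:{0..1}|lborel. W u) = - c / pi\<^sup>2" by simp
  have "(LINT u:{0..1}|lborel. (W u)\<^sup>2) = (LINT u:{0..1}|lborel. (c / pi\<^sup>2)\<^sup>2 * (cos (pi * u) - 1)\<^sup>2)"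
    by (rule set_lebesgue_integral_cong) (auto simp: W_eq power_mult_distrib[symmetric])
  then have square: "(LINT u:{0..1}|lborel. (W u)\<^sup>2) = (c / pi\<^sup>2)\<^sup>2 * (3 / 2)"
    by (simp add: set_integral_cos_minus_one_square)
  have "(LINT u:{0..1}|lborel. (G u)\<^sup>2) = (LINT u:{0<..<1}|lborel. c\<^sup>2 * (cos (pi * u))\<^sup>2)"
    unfolding set_integral_Icc_eq_Ioo(1) by (rule set_lebesgue_integral_cong) (auto simp: G_eq power_mult_distrib)
  then have "(LINT u:{0..1}|lborel. (G u)\<^sup>2) = c\<^sup>2 / 2"
    by (simp add: set_integral_Icc_eq_Ioo(1)[symmetric] set_integral_cos_square)
  then show ?thesis
    unfolding mean square by (simp add: power2_eq_square power4_eq_xxxx field_simps)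
qed

section \<open>The quantile transform\<close>

locale density_quantile =
  fixes f :: "real \<Rightarrow> real"
  assumes prob_density: "prob_density f"
begin

definition M :: "real measure" where "M = density lborel (\<lambda>x. ennreal (f x))"

lemma f_measurable [measurable]: "f \<in> borel_measurable borel"
  and f_nonneg: "0 \<le> f x" and f_integrable: "integrable lborel f" and f_integral: "(\<integral>x. f x \<partial>lborel) = 1"
  using prob_density by (auto simp: prob_density_def measurable_lborel1)

lemma real_distribution_M: "real_distribution M"
proof -
  have "emeasure M (space M) = ennreal (\<integral>x. f x \<partial>lborel)"
    unfolding M_def using f_integrable f_nonneg
    by (simp add: emeasure_density nn_integral_eq_integral)
  then have "prob_space M" by (intro prob_spaceI) (simp add: f_integral)
  then show ?thesis by (simp add: real_distribution_def real_distribution_axioms_def M_def)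
qed

sublocale cd: cdf_distribution M
  unfolding cdf_distribution_def by (rule real_distribution_M)

lemma integral_M: "g \<in> borel_measurable borel \<Longrightarrow> (\<integral>x. g x \<partial>M) = (\<integral>x. f x * g x \<partial>lborel)"
  unfolding M_def by (subst integral_density) (auto simp: f_nonneg measurable_lborel1)

lemma integrable_M: "g \<in> borel_measurable borel \<Longrightarrow> integrable M g \<longleftrightarrow> integrable lborel (\<lambda>x. f x * g x)"
  unfolding M_def by (subst integrable_density) (auto simp: f_nonneg measurable_lborel1)

lemma isCont_cdf_M: "isCont (cdf M) x"
proof -
  have "AE t in lborel. f t * indicator {x} t = 0"
    using AE_lborel_singleton[of x] by eventually_elim auto
  then have "(\<integral>t. f t * indicator {x} t \<partial>lborel) = 0" by (simp add: integral_cong_AE[of _ _ "\<lambda>_. 0"])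
  then have "measure M {x} = 0" using integral_M[of "indicator {x}"] by simp
  then show ?thesis by (simp add: cd.isCont_cdf)
qed

lemma cdf_M_bounds: "0 \<le> cdf M x" "cdf M x \<le> 1"
  using cd.cdf_nonneg cd.cdf_bounded_prob by auto

definition Finv :: "real \<Rightarrow> real" where "Finv u = (if u \<in> {0<..<1} then cd.I u else 0)"

lemma Finv_le_iff: "u \<in> {0<..<1} \<Longrightarrow> Finv u \<le> x \<longleftrightarrow> u \<le> cdf M x"
  using cd.pseudoinverse[of u x] by (simp add: Finv_def)

text \<open>Here the continuity of the distribution function is used.\<close>
lemma cdf_Finv: assumes u: "u \<in> {0<..<1}" shows "cdf M (Finv u) = u"
proof (rule antisym)
  show "u \<le> cdf M (Finv u)" using Finv_le_iff[OF u, of "Finv u"] by simp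
  show "cdf M (Finv u) \<le> u"
  proof (rule ccontr)
    assume "\<not> cdf M (Finv u) \<le> u"
    then have lt: "u < cdf M (Finv u)" by simp
    have "(cdf M \<longlongrightarrow> cdf M (Finv u)) (at_left (Finv u))"
      using isCont_cdf_M[of "Finv u"] by (simp add: isCont_def filterlim_at_split)
    then have "eventually (\<lambda>x. u < cdf M x) (at_left (Finv u))"
      using order_tendstoD(1)[OF _ lt] by blast
    moreover have "eventually (\<lambda>x. x < Finv u) (at_left (Finv u))" unfolding eventually_at_filter by simp
    ultimately obtain x where "u < cdf M x" "x < Finv u"
      using eventually_happens[of _ "at_left (Finv u)"] eventually_conj
      by (fastforce simp: trivial_limit_at_left_real)
    then show False using Finv_le_iff[OF u, of x] by simp
  qed
qed

lemma Finv_mono: "u \<in> {0<..<1} \<Longrightarrow> v \<in> {0<..<1} \<Longrightarrow> u \<le> v \<Longrightarrow> Finv u \<le> Finv v"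
  using cd.mono_I unfolding mono_on_def by (simp add: Finv_def)

lemma Finv_measurable [measurable]: "Finv \<in> borel_measurable borel"
proof -
  have "(\<lambda>x. if x \<in> {0<..<1} then cd.I x else 0) \<in> borel_measurable borel"
    using cd.measurable_CI by (subst (asm) measurable_restrict_space_iff) auto
  then show ?thesis by (simp add: Finv_def[abs_def])
qed

lemma Finv_left_continuous:
  assumes u: "u \<in> {0<..<1}"
  shows "continuous (at u within {0..u}) Finv"
  unfolding continuous_within_eps_delta
proof (intro allI impI)
  fix e :: real assume e: "0 < e"
  have below: "cdf M (Finv u - e) < u"
    using Finv_le_iff[OF u, of "Finv u - e"] e by linarith
  define d where "d = min (u - cdf M (Finv u - e)) u"
  show "\<exists>d>0. \<forall>w\<in>{0..u}. dist w u < d \<longrightarrow> dist (Finv w) (Finv u) < e"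
  proof (intro exI[of _ d] conjI ballI impI)
    show "0 < d" using below u by (simp add: d_def)
    fix w assume w: "w \<in> {0..u}" "dist w u < d"
    then have w1: "u - d < w" "w \<le> u" by (auto simp: dist_real_def)
    then have w01: "w \<in> {0<..<1}" using u by (auto simp: d_def)
    have "Finv u - e < Finv w" using Finv_le_iff[OF w01, of "Finv u - e"] w1 by (auto simp: d_def)
    moreover have "Finv w \<le> Finv u" using Finv_mono[OF w01 u w1(2)] .
    ultimately show "dist (Finv w) (Finv u) < e" by (simp add: dist_real_def)
  qed
qed

definition U :: "real measure" where "U = restrict_space lborel {0<..<1}"

lemma distr_U_Finv: "distr U borel Finv = M"
proof -
  have "distr U borel Finv = distr U borel cd.I"
    by (rule distr_cong) (auto simp: U_def space_restrict_space Finv_def)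
  then show ?thesis using cd.distr_I_eq_M by (simp add: U_def)
qed

lemma Finv_measurable_U: "Finv \<in> measurable U borel"
  unfolding U_def by (rule measurable_restrict_space1) (simp add: measurable_lborel1)

lemma integral_transfer:
  assumes h [measurable]: "h \<in> borel_measurable borel"
  shows "(\<integral>x. f x * h x \<partial>lborel) = (LINT u:{0<..<1}|lborel. h (Finv u))"
proof -
  have "(\<integral>x. f x * h x \<partial>lborel) = (\<integral>x. h x \<partial>distr U borel Finv)" by (simp add: integral_M distr_U_Finv)
  also have "\<dots> = (\<integral>u. h (Finv u) \<partial>U)" by (rule integral_distr[OF Finv_measurable_U h])
  finally show ?thesis
    unfolding U_def set_lebesgue_integral_def by (simp add: integral_restrict_space)
qed

lemma integrable_transfer:
  assumes h [measurable]: "h \<in> borel_measurable borel"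
  shows "integrable lborel (\<lambda>x. f x * h x) \<longleftrightarrow> set_integrable lborel {0<..<1} (\<lambda>u. h (Finv u))"
proof -
  have "integrable lborel (\<lambda>x. f x * h x) \<longleftrightarrow> integrable (distr U borel Finv) h"
    by (simp add: integrable_M distr_U_Finv)
  also have "\<dots> \<longleftrightarrow> integrable U (\<lambda>u. h (Finv u))" by (rule integrable_distr_eq[OF Finv_measurable_U h])
  finally show ?thesis
    unfolding U_def set_integrable_def by (simp add: integrable_restrict_space)
qed

end

locale symmetric_density_quantile = density_quantile +
  assumes symmetric: "symmetric_fun f"
    and finite_variance: "integrable lborel (\<lambda>x. x\<^sup>2 * f x)"
begin

lemma first_moment_integrable: "integrable lborel (\<lambda>x. f x * x)"
proof (rule Bochner_Integration.integrable_bound)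
  show "integrable lborel (\<lambda>x. f x + x\<^sup>2 * f x)"
    by (rule Bochner_Integration.integrable_add[OF f_integrable finite_variance])
  show "AE x in lborel. norm (f x * x) \<le> norm (f x + x\<^sup>2 * f x)"
  proof (intro AE_I2)
    fix x :: real
    have "0 \<le> (\<bar>x\<bar> - 1)\<^sup>2" by simp
    then have "2 * \<bar>x\<bar> \<le> x\<^sup>2 + 1" by (simp add: power2_eq_square abs_mult_self_eq algebra_simps)
    then have "\<bar>x\<bar> \<le> 1 + x\<^sup>2" using zero_le_power2[of x] by linarith
    from mult_left_mono[OF this f_nonneg[of x]]
    show "norm (f x * x) \<le> norm (f x + x\<^sup>2 * f x)"
      using f_nonneg[of x] by (simp add: abs_mult algebra_simps)
  qed
qed simp

lemma Finv_integrable: "set_integrable lborel {0..1} Finv"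
  using integrable_transfer[of "\<lambda>x. x"] first_moment_integrable by (simp add: set_integral_Icc_eq_Ioo)

lemma Finv_square_integrable: "set_integrable lborel {0..1} (\<lambda>u. (Finv u)\<^sup>2)"
  using integrable_transfer[of "\<lambda>x. x\<^sup>2"] finite_variance by (simp add: set_integral_Icc_eq_Ioo mult.commute)

lemma Finv_mean_zero: "(LINT u:{0..1}|lborel. Finv u) = 0"
proof -
  have "(\<integral>x. f x * x \<partial>lborel) = \<bar>-1\<bar> *\<^sub>R (\<integral>x. f (0 + -1 * x) * (0 + -1 * x) \<partial>lborel)"
    by (rule lborel_integral_real_affine) simp
  also have "\<dots> = - (\<integral>x. f x * x \<partial>lborel)"
    using symmetric by (simp add: symmetric_fun_def)
  finally show ?thesis using integral_transfer[of "\<lambda>x. x"] by (simp add: set_integral_Icc_eq_Ioo)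
qed

lemma var_f_eq: "var_f f = (LINT u:{0..1}|lborel. (Finv u)\<^sup>2)"
  using integral_transfer[of "\<lambda>x. x\<^sup>2"] by (simp add: var_f_def set_integral_Icc_eq_Ioo mult.commute)

sublocale square_integrable_left_continuous Finv
  using Finv_measurable Finv_integrable Finv_square_integrable Finv_left_continuous by unfold_locales

lemma v_fun_eq: "v_fun f x = V (cdf M x)"
proof -
  have "v_fun f x = (\<integral>u. f u * (indicator {..x} u * u) \<partial>lborel)"
    unfolding v_fun_def set_lebesgue_integral_def by (intro Bochner_Integration.integral_cong) auto
  also have "\<dots> = (LINT w:{0<..<1}|lborel. indicator {..x} (Finv w) * Finv w)"
    by (rule integral_transfer) measurable
  also have "\<dots> = (LINT w:{0<..<1}|lborel. indicator {..cdf M x} w * Finv w)"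
    by (rule set_lebesgue_integral_cong) (auto simp: Finv_le_iff indicator_def)
  also have "\<dots> = V (cdf M x)"
    using cdf_M_bounds by (simp add: set_integral_Ioo_indicator_atMost cumulative_integral_eq)
  finally show ?thesis .
qed

lemma q_fun_eq: "q_fun f s = W (cdf M s)"
proof -
  have [measurable]: "V \<in> borel_measurable borel"
    by (intro borel_measurable_continuous_onI continuous_on_V)
  have "q_fun f s = (\<integral>x. f x * (indicator {..s} x * V (cdf M x)) \<partial>lborel)"
    unfolding q_fun_def set_lebesgue_integral_def by (intro Bochner_Integration.integral_cong) (auto simp: v_fun_eq)
  also have "\<dots> = (LINT w:{0<..<1}|lborel. indicator {..s} (Finv w) * V (cdf M (Finv w)))"
    by (rule integral_transfer) measurable
  also have "\<dots> = (LINT w:{0<..<1}|lborel. indicator {..cdf M s} w * V w)"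
    by (rule set_lebesgue_integral_cong) (auto simp: Finv_le_iff indicator_def cdf_Finv)
  also have "\<dots> = W (cdf M s)"
    using cdf_M_bounds by (simp add: set_integral_Ioo_indicator_atMost cumulative_integral_eq)
  finally show ?thesis .
qed

lemma integral_q_fun_transfer:
  assumes [measurable]: "h \<in> borel_measurable borel"
  shows "(\<integral>s. h (q_fun f s) * f s \<partial>lborel) = (LINT u:{0..1}|lborel. h (W u))"
proof -
  have [measurable]: "W \<in> borel_measurable borel"
    by (intro borel_measurable_continuous_onI continuous_on_cumulative_integral
        borel_integrable_atLeastAtMost' continuous_on_V)
  have "(\<integral>s. h (q_fun f s) * f s \<partial>lborel) = (\<integral>s. f s * h (W (cdf M s)) \<partial>lborel)"
    by (simp add: q_fun_eq mult.commute)
  also have "\<dots> = (LINT u:{0<..<1}|lborel. h (W (cdf M (Finv u))))"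
    by (rule integral_transfer) measurable
  also have "\<dots> = (LINT u:{0..1}|lborel. h (W u))"
    unfolding set_integral_Icc_eq_Ioo by (rule set_lebesgue_integral_cong) (auto simp: cdf_Finv)
  finally show ?thesis .
qed

end

section \<open>The arcsine law\<close>

lemma arcsine_density_measurable [measurable]: "arcsine_density c \<in> borel_measurable borel"
  unfolding arcsine_density_def[abs_def] by measurable

lemma arcsine_density_nonneg: "0 \<le> arcsine_density c x"
proof (cases "- c < x \<and> x < c")
  case True
  then have "0 < (c - x) * (c + x)" by (intro mult_pos_pos) auto
  then have "0 < c\<^sup>2 - x\<^sup>2" by (simp add: power2_eq_square algebra_simps)
  then show ?thesis using True by (simp add: arcsine_density_def)
qed (auto simp: arcsine_density_def)

lemma arcsine_density_cos_mult_sin: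
  assumes c: "c > 0" and u: "0 < u" "u < 1"
  shows "arcsine_density c (- c * cos (pi * u)) * (c * pi * sin (pi * u)) = 1"
proof -
  have s: "sin (pi * u) > 0" using u by (intro sin_gt_zero) auto
  have cl: "cos (pi * u) < 1"
  proof -
    have "cos (pi * u) < cos 0" using u by (intro cos_monotone_0_pi) auto
    then show ?thesis by simp
  qed
  have cg: "- 1 < cos (pi * u)"
  proof -
    have "cos pi < cos (pi * u)" using u by (intro cos_monotone_0_pi) auto
    then show ?thesis by simp
  qed
  have in1: "- c < - c * cos (pi * u)" using c cl by (simp add: mult_less_cancel_left_pos)
  have "c * (- cos (pi * u)) < c * 1" using c cg by (intro mult_strict_left_mono) auto
  then have in2: "- c * cos (pi * u) < c" by simp
  have "c\<^sup>2 - (- c * cos (pi * u))\<^sup>2 = c\<^sup>2 * (1 - (cos (pi * u))\<^sup>2)"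
    by (simp add: power_mult_distrib algebra_simps)
  also have "\<dots> = (c * sin (pi * u))\<^sup>2" by (simp add: sin_squared_eq power_mult_distrib)
  finally have "c\<^sup>2 - (- c * cos (pi * u))\<^sup>2 = (c * sin (pi * u))\<^sup>2" .
  then have sq: "sqrt (c\<^sup>2 - (- c * cos (pi * u))\<^sup>2) = c * sin (pi * u)" using c s by simp
  show ?thesis using in1 in2 sq c s by (simp add: arcsine_density_def)
qed

lemma indicator_preimage_neg_cos:
  assumes c: "c > 0"
  shows "indicator ((\<lambda>u. - c * cos (pi * u)) -` A \<inter> {0<..<1}) u
    = ennreal (indicator A (- c * cos (pi * u)) * arcsine_density c (- c * cos (pi * u))
        * (c * pi * sin (pi * u)) * indicator {0..1} u)"
proof (cases "0 < u \<and> u < 1")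
  case True
  then show ?thesis using arcsine_density_cos_mult_sin[OF c, of u] by (auto simp: indicator_def)
next
  case False
  then consider "u \<notin> {0..1}" | "u = 0" | "u = 1" by fastforce
  then show ?thesis using False by cases (auto simp: indicator_def arcsine_density_def)
qed

lemma distr_neg_cos_eq_arcsine:
  fixes c :: real
  assumes c: "c > 0"
  shows "distr (restrict_space lborel {0<..<1}) borel (\<lambda>u. - c * cos (pi * u))
    = density lborel (\<lambda>x. ennreal (arcsine_density c x))"
proof (rule measure_eqI)
  fix A assume "A \<in> sets (distr (restrict_space lborel {0<..<1}) borel (\<lambda>u. - c * cos (pi * u)))"
  then have [measurable]: "A \<in> sets borel" by simp
  define g where "g u = - c * cos (pi * u)" for u :: real
  define F where "F x = indicator A x * arcsine_density c x" for x :: real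
  have [measurable]: "g \<in> borel_measurable borel" unfolding g_def by measurable
  have "emeasure (distr (restrict_space lborel {0<..<1}) borel g) A = emeasure lborel (g -` A \<inter> {0<..<1})"
    by (subst emeasure_distr) (auto simp: measurable_restrict_space1 measurable_lborel1
        emeasure_restrict_space space_restrict_space)
  also have "\<dots> = (\<integral>\<^sup>+u. indicator (g -` A \<inter> {0<..<1}) u \<partial>lborel)"
    by (rule nn_integral_indicator[symmetric]) measurable
  also have "\<dots> = (\<integral>\<^sup>+u. ennreal (F (g u) * (c * pi * sin (pi * u)) * indicator {0..1} u) \<partial>lborel)"
    unfolding g_def[abs_def] F_def by (rule nn_integral_cong) (rule indicator_preimage_neg_cos[OF c])
  also have "\<dots> = (\<integral>\<^sup>+x. F x * indicator {g 0..g 1} x \<partial>lborel)"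
  proof (rule nn_integral_substitution[symmetric])
    show "set_borel_measurable borel {g 0..g 1} F" unfolding set_borel_measurable_def F_def by measurable
    show "(g has_real_derivative c * pi * sin (pi * x)) (at x)" for x
      unfolding g_def by (auto intro!: derivative_eq_intros)
    show "0 \<le> c * pi * sin (pi * x)" if "x \<in> {0..1}" for x
      using that c mult_left_le[of x pi] by (intro mult_nonneg_nonneg sin_ge_zero) auto
  qed (auto intro!: continuous_intros)
  also have "\<dots> = (\<integral>\<^sup>+x. ennreal (arcsine_density c x) * indicator A x \<partial>lborel)"
    by (rule nn_integral_cong) (auto simp: F_def g_def indicator_def arcsine_density_def)
  finally show "emeasure (distr (restrict_space lborel {0<..<1}) borel (\<lambda>u. - c * cos (pi * u))) A =
      emeasure (density lborel (\<lambda>x. ennreal (arcsine_density c x))) A"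
    by (simp add: emeasure_density g_def[abs_def])
qed simp

lemma AE_lborel_obtain_between:
  assumes ae: "AE x in lborel. P x" and ab: "a < (b::real)"
  shows "\<exists>x. a < x \<and> x < b \<and> P x"
proof (rule ccontr)
  assume "\<not> (\<exists>x. a < x \<and> x < b \<and> P x)"
  then have sub: "{a<..<b} \<subseteq> {x. \<not> P x}" by auto
  from ae obtain N where N: "{x \<in> space lborel. \<not> P x} \<subseteq> N" "emeasure lborel N = 0" "N \<in> sets lborel"
    by (auto elim!: AE_E)
  have "emeasure lborel {a<..<b} \<le> emeasure lborel N"
    by (rule emeasure_mono) (use sub N in auto)
  then show False using N ab by simp
qed

context density_quantile
begin

lemma Finv_eq_neg_cos_imp_arcsine:
  assumes c: "c > 0" and Finv_eq: "AE u in lborel. u \<in> {0<..<1} \<longrightarrow> Finv u = - c * cos (pi * u)"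
  shows "AE x in lborel. f x = arcsine_density c x"
proof -
  have "M = distr U borel (\<lambda>u. - c * cos (pi * u))"
    unfolding distr_U_Finv[symmetric]
  proof (rule distr_cong_AE)
    show "AE u in U. Finv u = - c * cos (pi * u)"
      unfolding U_def using Finv_eq by (subst AE_restrict_space_iff) auto
    show "(\<lambda>u. - c * cos (pi * u)) \<in> measurable U borel"
      unfolding U_def by (rule measurable_restrict_space1) (simp add: measurable_lborel1)
  qed (auto simp: Finv_measurable_U)
  also have "\<dots> = density lborel (\<lambda>x. ennreal (arcsine_density c x))"
    unfolding U_def by (rule distr_neg_cos_eq_arcsine[OF c])
  finally have "AE x in lborel. ennreal (f x) = ennreal (arcsine_density c x)"
    unfolding M_def
    by (subst (asm) sigma_finite_measure.density_unique_iff[OF sigma_finite_lborel]) (auto simp: measurable_lborel1)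
  then show ?thesis by eventually_elim (simp add: f_nonneg arcsine_density_nonneg)
qed

lemma cdf_neg_cos:
  assumes c: "c > 0" and M_eq: "M = distr U borel (\<lambda>u. - c * cos (pi * u))" and v: "0 \<le> v" "v < 1"
  shows "cdf M (- c * cos (pi * v)) = v"
proof -
  define g where "g u = - c * cos (pi * u)" for u :: real
  have g_le_iff: "g w \<le> g v \<longleftrightarrow> w \<le> v" if "w \<in> {0..1}" for w
  proof -
    have "g w \<le> g v \<longleftrightarrow> cos (pi * v) \<le> cos (pi * w)" using c by (simp add: g_def)
    also have "\<dots> \<longleftrightarrow> pi * w \<le> pi * v"
      using that v by (intro cos_mono_le_eq) (auto intro: mult_left_le)
    finally show ?thesis by simp
  qed
  have "g \<in> measurable U borel"
    unfolding U_def g_def by (rule measurable_restrict_space1) (simp add: measurable_lborel1)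
  then have "cdf M (g v) = measure U (g -` {..g v} \<inter> space U)"
    unfolding cdf_def M_eq g_def[symmetric] by (rule measure_distr) simp
  also have "g -` {..g v} \<inter> space U = {0<..v}"
    using g_le_iff v by (auto simp: U_def space_restrict_space)
  also have "measure U {0<..v} = v"
    unfolding U_def using v by (subst measure_restrict_space) auto
  finally show ?thesis by (simp add: g_def)
qed

lemma arcsine_imp_Finv_eq_neg_cos:
  assumes c: "c > 0" and ae: "AE x in lborel. f x = arcsine_density c x" and u: "u \<in> {0<..<1}"
  shows "Finv u = - c * cos (pi * u)"
proof -
  have "M = density lborel (\<lambda>x. ennreal (arcsine_density c x))"
    unfolding M_def by (rule density_cong) (use ae in \<open>auto simp: measurable_lborel1\<close>)
  also have "\<dots> = distr U borel (\<lambda>u. - c * cos (pi * u))"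
    unfolding U_def by (rule distr_neg_cos_eq_arcsine[OF c, symmetric])
  finally have cdf_eq: "cdf M (- c * cos (pi * v)) = v" if "0 \<le> v" "v < 1" for v
    using cdf_neg_cos[OF c _ that] by simp
  show ?thesis
  proof (rule antisym)
    show "Finv u \<le> - c * cos (pi * u)" using Finv_le_iff[OF u] cdf_eq[of u] u by simp
    show "- c * cos (pi * u) \<le> Finv u"
    proof (rule ccontr)
      assume "\<not> ?thesis"
      then have lt: "Finv u < - c * cos (pi * u)" by simp
      have u_le: "u \<le> cdf M (Finv u)" using Finv_le_iff[OF u, of "Finv u"] by simp
      show False
      proof (cases "Finv u \<le> - c")
        case True
        then have "cdf M (Finv u) \<le> cdf M (- c * cos (pi * 0))" by (simp add: cd.cdf_nondecreasing)
        then show False using cdf_eq[of 0] u_le u by simp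
      next
        case False
        then obtain w where w: "0 \<le> w" "w \<le> u" "- c * cos (pi * w) = Finv u"
          using IVT[of "\<lambda>w. - c * cos (pi * w)" 0 "Finv u" u] lt u by (auto intro!: continuous_intros)
        then have "w < u" using lt by (cases "w = u") auto
        then show False using cdf_eq[of w] w u u_le by simp
      qed
    qed
  qed
qed

end

context symmetric_density_quantile
begin

lemma cos_coefficient_neg:
  assumes var_pos: "var_f f > 0" and k: "AE u in lborel. u \<in> {0<..<1} \<longrightarrow> Finv u = k * cos (pi * u)"
  shows "k < 0"
proof (rule ccontr)
  assume "\<not> k < 0"
  then consider "k = 0" | "k > 0" by linarith
  then show False
  proof cases
    case 1
    have ae: "AE u in lborel. indicator {0<..<1} u *\<^sub>R (Finv u)\<^sup>2 = (0::real)"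
      using k by eventually_elim (use 1 in \<open>auto simp: indicator_def\<close>)
    have "(LINT u:{0<..<1}|lborel. (Finv u)\<^sup>2) = integral\<^sup>L lborel (\<lambda>u::real. 0::real)"
      unfolding set_lebesgue_integral_def by (rule integral_cong_AE[OF _ _ ae]) (auto simp: measurable_lborel1)
    then show False using var_pos var_f_eq by (simp add: set_integral_Icc_eq_Ioo)
  next
    case 2
    obtain u1 where u1: "0 < u1" "u1 < 1/3" "u1 \<in> {0<..<1} \<longrightarrow> Finv u1 = k * cos (pi * u1)"
      using AE_lborel_obtain_between[OF k, of 0 "1/3"] by auto
    obtain u2 where u2: "2/3 < u2" "u2 < 1" "u2 \<in> {0<..<1} \<longrightarrow> Finv u2 = k * cos (pi * u2)"
      using AE_lborel_obtain_between[OF k, of "2/3" 1] by auto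
    have "cos (pi * u2) < cos (pi * u1)" using u1 u2 by (intro cos_monotone_0_pi) auto
    moreover have "Finv u1 \<le> Finv u2" using u1 u2 by (intro Finv_mono) auto
    ultimately show False using u1 u2 2 by auto
  qed
qed

lemma efficiency_one_iff:
  "pi ^ 4 * ((\<integral>s. (q_fun f s)\<^sup>2 * f s \<partial>lborel) - (\<integral>s. q_fun f s * f s \<partial>lborel)\<^sup>2) = var_f f
    \<longleftrightarrow> pi ^ 4 * ((LINT u:{0..1}|lborel. (W u)\<^sup>2) - (LINT u:{0..1}|lborel. W u)\<^sup>2)
      = (LINT u:{0..1}|lborel. (Finv u)\<^sup>2)"
  using integral_q_fun_transfer[of "\<lambda>x. x\<^sup>2"] integral_q_fun_transfer[of "\<lambda>x. x"] by (simp add: var_f_eq)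

lemma double_primitive_variance_eq_imp_arcsine:
  assumes var_pos: "var_f f > 0"
    and eq: "pi ^ 4 * ((LINT u:{0..1}|lborel. (W u)\<^sup>2) - (LINT u:{0..1}|lborel. W u)\<^sup>2)
      = (LINT u:{0..1}|lborel. (Finv u)\<^sup>2)"
  shows "\<exists>c>0. AE x in lborel. f x = arcsine_density c x"
proof -
  obtain k where k: "AE u in lborel. u \<in> {0<..<1} \<longrightarrow> Finv u = k * cos (pi * u)"
    using double_primitive_variance_eq_imp_cos[OF Finv_mean_zero eq] by blast
  have "k < 0" using cos_coefficient_neg[OF var_pos k] .
  moreover from this have "AE x in lborel. f x = arcsine_density (- k) x"
    using k by (intro Finv_eq_neg_cos_imp_arcsine) auto
  ultimately show ?thesis by (intro exI[of _ "- k"]) simp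
qed

lemma arcsine_imp_double_primitive_variance_eq:
  assumes "c > 0" "AE x in lborel. f x = arcsine_density c x"
  shows "pi ^ 4 * ((LINT u:{0..1}|lborel. (W u)\<^sup>2) - (LINT u:{0..1}|lborel. W u)\<^sup>2)
    = (LINT u:{0..1}|lborel. (Finv u)\<^sup>2)"
  using arcsine_imp_Finv_eq_neg_cos[OF assms] by (intro cos_double_primitive_variance_eq)

end

theorem mainTheorem4:
  fixes f :: "real \<Rightarrow> real"
  assumes dens: "prob_density f"
    and symm: "symmetric_fun f"
    and finvar: "integrable lborel (\<lambda>x. x\<^sup>2 * f x)"
    and varpos: "var_f f > 0"
  shows "pi ^ 4 * ((\<integral>s. (q_fun f s)\<^sup>2 * f s \<partial>lborel) - (\<integral>s. q_fun f s * f s \<partial>lborel)\<^sup>2) = var_f f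
         \<longleftrightarrow> (\<exists>c>0. AE x in lborel. f x = arcsine_density c x)"
proof -
  interpret symmetric_density_quantile f
    by unfold_locales (rule dens symm finvar)+
  show ?thesis
    unfolding efficiency_one_iff
    using double_primitive_variance_eq_imp_arcsine[OF varpos] arcsine_imp_double_primitive_variance_eq
    by blast
qed

end
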